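(* Let $(\mathcal{F},\mathcal{F}_d,R)$ be a complementary justification frame and $x\in\mathcal{F}_d$. If $J\in\mathfrak{J}(x)$ and $K\in\mathfrak{J}(\sim x)$, then there exists a $J$-branch $b$ starting in $x$ such that $\sim b$ is a $K$-branch starting in $\sim x$.
   Context: A fact space is a set $\mathcal{F}$ containing $\mathcal{L}=\{\mathbf{t},\mathbf{f},\mathbf{u}\}$, equipped with an involution $\sim$ with $\sim\mathbf{t}=\mathbf{f}$, $\sim\mathbf{u}=\mathbf{u}$, $\sim x\ne x$ for $x\ne\mathbf{u}$; $\sim A=\{\sim a:a\in A\}$, and for $b:x_0\to x_1\to\cdots$, $\sim b:\sim x_0\to\sim x_1\to\cdots$. A justification frame is $(\mathcal{F},\mathcal{F}_d,R)$ with defined facts $\mathcal{F}_d\subseteq\mathcal{F}$, $\sim\mathcal{F}_d=\mathcal{F}_d$, $\mathcal{L}\cap\mathcal{F}_d=\emptyset$, and rules $R\subseteq\mathcal{F}_d\times2^{\mathcal{F}}$ written $x\gets A$, such that each $x\in\mathcal{F}_d$ has a rule with nonempty body and no rule with empty body; open facts $\mathcal{F}_o=\mathcal{F}\setminus\mathcal{F}_d$. Let $R(x)$ be the set of bodies of rules with head $x$. A selection function for $x$ is a map $S:R(x)\to\mathcal{F}$ with $S(A)\in A$; $\mathrm{im}(S)$ is its image. The frame is complementary if for every $x\in\mathcal{F}_d$: (1) for every selection function $S$ for $x$ there is $A\in R(\sim x)$ with $A\subseteq\sim\mathrm{im}(S)$; (2) for every $A\in R(x)$ there is a selection function $S$ for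 $\sim x$ with $\sim\mathrm{im}(S)\subseteq A$. A (tree-like) justification is a directed labeled forest whose internal nodes $n$ are labeled by defined facts with $\ell(n)\gets\{\ell(m):(n,m)\text{ an edge}\}\in R$; it is locally complete if no leaf is labeled by a defined fact; rooted in $x$ if a node labeled $x$ reaches all nodes. $\mathfrak{J}(x)$ is the set of locally complete justifications rooted in $x$. A $J$-branch starting in $x$ is a path in $J$ from the root node labeled $x$ that is infinite or ends in a leaf. *)

theory Defs
  imports Main "HOL-Library.Extended_Nat"
begin

definition fact_space :: "'a set \<Rightarrow> ('a \<Rightarrow> 'a) \<Rightarrow> 'a \<Rightarrow> 'a \<Rightarrow> 'a \<Rightarrow> bool" where
  "fact_space F neg t f u \<longleftrightarrow>
     {t, f, u} \<subseteq> F \<and> t \<noteq> f \<and> t \<noteq> u \<and> f \<noteq> u \<and>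
     (\<forall>x\<in>F. neg x \<in> F \<and> neg (neg x) = x) \<and>
     neg t = f \<and> neg u = u \<and> (\<forall>x\<in>F. x \<noteq> u \<longrightarrow> neg x \<noteq> x)"

definition justification_frame ::
  "'a set \<Rightarrow> ('a \<Rightarrow> 'a) \<Rightarrow> 'a \<Rightarrow> 'a \<Rightarrow> 'a \<Rightarrow> 'a set \<Rightarrow> ('a \<times> 'a set) set \<Rightarrow> bool" where
  "justification_frame F neg t f u Fd R \<longleftrightarrow>
     fact_space F neg t f u \<and> Fd \<subseteq> F \<and> neg ` Fd = Fd \<and> {t, f, u} \<inter> Fd = {} \<and>
     R \<subseteq> Fd \<times> Pow F \<and>
     (\<forall>x\<in>Fd. \<exists>A. (x, A) \<in> R \<and> A \<noteq> {}) \<and>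
     (\<forall>x\<in>Fd. (x, {}) \<notin> R)"

definition rules :: "('a \<times> 'a set) set \<Rightarrow> 'a \<Rightarrow> 'a set set" where
  "rules R x = {A. (x, A) \<in> R}"

text \<open>Selection function for x: picks an element from each body of a rule with head x
  (its values outside R(x) are irrelevant); its image is S ` rules R x.\<close>
definition selection :: "('a \<times> 'a set) set \<Rightarrow> 'a \<Rightarrow> ('a set \<Rightarrow> 'a) \<Rightarrow> bool" where
  "selection R x S \<longleftrightarrow> (\<forall>A\<in>rules R x. S A \<in> A)"

definition complementary :: "('a \<Rightarrow> 'a) \<Rightarrow> 'a set \<Rightarrow> ('a \<times> 'a set) set \<Rightarrow> bool" where
  "complementary neg Fd R \<longleftrightarrow>
     (\<forall>x\<in>Fd.
        (\<forall>S. selection R x S \<longrightarrow> (\<exists>A\<in>rules R (neg x). A \<subseteq> neg ` (S ` rules R x))) \<and>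
        (\<forall>A\<in>rules R x. \<exists>S. selection R (neg x) S \<and> neg ` (S ` rules R (neg x)) \<subseteq> A))"

text \<open>Tree-like justification: a directed labelled forest (N, E, l) with edges pointing
  from parents to children.\<close>
definition justification ::
  "'a set \<Rightarrow> 'a set \<Rightarrow> ('a \<times> 'a set) set \<Rightarrow> 'n set \<Rightarrow> ('n \<times> 'n) set \<Rightarrow> ('n \<Rightarrow> 'a) \<Rightarrow> bool" where
  "justification F Fd R N E l \<longleftrightarrow>
     E \<subseteq> N \<times> N \<and> (\<forall>n\<in>N. l n \<in> F) \<and>
     (\<forall>n\<in>N. (n, n) \<notin> E\<^sup>+) \<and>
     (\<forall>m m' n. (m, n) \<in> E \<longrightarrow> (m', n) \<in> E \<longrightarrow> m = m') \<and>
     (\<forall>n\<in>N. (\<exists>m. (n, m) \<in> E) \<longrightarrow>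
        l n \<in> Fd \<and> (l n, l ` {m. (n, m) \<in> E}) \<in> R)"

definition locally_complete :: "'a set \<Rightarrow> 'n set \<Rightarrow> ('n \<times> 'n) set \<Rightarrow> ('n \<Rightarrow> 'a) \<Rightarrow> bool" where
  "locally_complete Fd N E l \<longleftrightarrow> (\<forall>n\<in>N. \<not> (\<exists>m. (n, m) \<in> E) \<longrightarrow> l n \<notin> Fd)"

definition rooted_in :: "'n set \<Rightarrow> ('n \<times> 'n) set \<Rightarrow> ('n \<Rightarrow> 'a) \<Rightarrow> 'a \<Rightarrow> bool" where
  "rooted_in N E l x \<longleftrightarrow> (\<exists>r\<in>N. l r = x \<and> (\<forall>n\<in>N. (r, n) \<in> E\<^sup>*))"

definition in_JJ ::
  "'a set \<Rightarrow> 'a set \<Rightarrow> ('a \<times> 'a set) set \<Rightarrow> 'n set \<Rightarrow> ('n \<times> 'n) set \<Rightarrow> ('n \<Rightarrow> 'a) \<Rightarrow> 'a \<Rightarrow> bool" where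
  "in_JJ F Fd R N E l x \<longleftrightarrow>
     justification F Fd R N E l \<and> locally_complete Fd N E l \<and> rooted_in N E l x"

definition branch :: "'n set \<Rightarrow> ('n \<times> 'n) set \<Rightarrow> ('n \<Rightarrow> 'a) \<Rightarrow> 'a \<Rightarrow> (nat \<Rightarrow> 'n) \<Rightarrow> enat \<Rightarrow> bool" where
  "branch N E l x p len \<longleftrightarrow>
     (\<exists>r\<in>N. l r = x \<and> (\<forall>n\<in>N. (r, n) \<in> E\<^sup>*) \<and> p 0 = r) \<and>
     len \<noteq> 0 \<and>
     (\<forall>i. enat (Suc i) < len \<longrightarrow> (p i, p (Suc i)) \<in> E) \<and>
     (\<forall>k. len = enat (Suc k) \<longrightarrow> \<not> (\<exists>m. (p k, m) \<in> E))"

end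

theory Submission
  imports Defs
begin

text \<open>Walk down J and K simultaneously, keeping the labels of the current nodes complementary.
  If the J-node is labelled y and has children, their labels form a body A of a rule for y;
  complementarity (2) yields a selection for the rules of \<open>\<sim>y\<close> whose negated image lies in A.
  Applied to the body formed by the children of the K-node (labelled \<open>\<sim>y\<close>), it picks a K-child
  whose negation labels some J-child. Since y and \<open>\<sim>y\<close> are both defined or both open, local
  completeness makes the two walks reach leaves at the same step.\<close>

lemma first_failure_length:
  fixes D :: "nat \<Rightarrow> bool"
  shows "\<exists>len. len \<noteq> 0 \<and> (\<forall>i. enat (Suc i) < len \<longrightarrow> D i) \<and>
    (\<forall>k. len = enat (Suc k) \<longrightarrow> \<not> D k)"
proof (cases "\<exists>k. \<not> D k")
  case True
  define k where "k = (LEAST k. \<not> D k)"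
  have "D i" if "enat (Suc i) < enat (Suc k)" for i
    using not_less_Least[of i "\<lambda>k. \<not> D k"] that unfolding k_def by simp
  moreover have "\<not> D k" using LeastI_ex[OF True] unfolding k_def .
  moreover have "enat (Suc k) \<noteq> 0" by (simp add: zero_enat_def)
  ultimately show ?thesis by blast
next
  case False
  then show ?thesis by (intro exI[of _ \<infinity>]) simp
qed

lemma maximal_path_exists:
  assumes "P a"
    and step: "\<And>z. P z \<Longrightarrow> D z \<Longrightarrow> \<exists>z'. Q z z' \<and> P z'"
  shows "\<exists>s len. s 0 = a \<and> len \<noteq> 0 \<and> (\<forall>i. P (s i)) \<and>
    (\<forall>i. enat (Suc i) < len \<longrightarrow> Q (s i) (s (Suc i))) \<and>
    (\<forall>k. len = enat (Suc k) \<longrightarrow> \<not> D (s k))"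
proof -
  define g where "g z = (if D z then SOME z'. Q z z' \<and> P z' else z)" for z
  define s where "s i = (g ^^ i) a" for i
  have g: "Q z (g z) \<and> P (g z)" if "P z" "D z" for z
    using someI_ex[OF step[OF that]] that(2) by (simp add: g_def)
  have P: "P (s i)" for i
    by (induction i) (use \<open>P a\<close> g in \<open>auto simp: s_def g_def\<close>)
  obtain len where "len \<noteq> 0" and stays: "\<forall>i. enat (Suc i) < len \<longrightarrow> D (s i)"
    and exits: "\<forall>k. len = enat (Suc k) \<longrightarrow> \<not> D (s k)"
    using first_failure_length[of "\<lambda>i. D (s i)"] by blast
  have "Q (s i) (s (Suc i))" if "enat (Suc i) < len" for i
    using g[OF P] stays that by (simp add: s_def)
  then show ?thesis
    using \<open>len \<noteq> 0\<close> P exits by (intro exI[of _ s] exI[of _ len]) (simp add: s_def)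
qed

lemma neg_mem_defined_iff:
  assumes "justification_frame F neg t f u Fd R" and "y \<in> F"
  shows "neg y \<in> Fd \<longleftrightarrow> y \<in> Fd"
proof -
  have "neg ` Fd = Fd" and "neg (neg y) = y"
    using assms unfolding justification_frame_def fact_space_def by auto
  then show ?thesis by (metis image_eqI)
qed

lemma locally_complete_has_child_iff:
  assumes "justification F Fd R N E l" and "locally_complete Fd N E l" and "n \<in> N"
  shows "(\<exists>c. (n, c) \<in> E) \<longleftrightarrow> l n \<in> Fd"
  using assms unfolding justification_def locally_complete_def by blast

lemma complementary_mirrored_children:
  assumes fr: "justification_frame F neg t f u Fd R"
    and co: "complementary neg Fd R"
    and jJ: "justification F Fd R NJ EJ lJ" and cJ: "locally_complete Fd NJ EJ lJ"
    and jK: "justification F Fd R NK EK lK" and cK: "locally_complete Fd NK EK lK"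
    and n: "n \<in> NJ" and m: "m \<in> NK" and mirrored: "lK m = neg (lJ n)"
    and has_child: "(\<exists>c. (n, c) \<in> EJ) \<or> (\<exists>c. (m, c) \<in> EK)"
  shows "\<exists>n' m'. (n, n') \<in> EJ \<and> (m, m') \<in> EK \<and> n' \<in> NJ \<and> m' \<in> NK \<and> lK m' = neg (lJ n')"
proof -
  let ?y = "lJ n"
  define BJ where "BJ = lJ ` {c. (n, c) \<in> EJ}"
  define BK where "BK = lK ` {c. (m, c) \<in> EK}"
  have fs: "fact_space F neg t f u" using fr unfolding justification_frame_def by blast
  have "?y \<in> F" using jJ n unfolding justification_def by blast
  have n_has_child: "(\<exists>c. (n, c) \<in> EJ) \<longleftrightarrow> ?y \<in> Fd"
    by (rule locally_complete_has_child_iff[OF jJ cJ n])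
  have m_has_child: "(\<exists>c. (m, c) \<in> EK) \<longleftrightarrow> ?y \<in> Fd"
    using locally_complete_has_child_iff[OF jK cK m] neg_mem_defined_iff[OF fr \<open>?y \<in> F\<close>]
    unfolding mirrored by simp
  have y: "?y \<in> Fd" using has_child n_has_child m_has_child by blast
  then have "\<exists>c. (n, c) \<in> EJ" "\<exists>c. (m, c) \<in> EK" using n_has_child m_has_child by auto
  then have BJ: "BJ \<in> rules R ?y" and BK: "BK \<in> rules R (neg ?y)"
    using jJ jK n m mirrored unfolding justification_def rules_def BJ_def BK_def by auto
  obtain S where S: "selection R (neg ?y) S" and S_sub: "neg ` (S ` rules R (neg ?y)) \<subseteq> BJ"
    using co y BJ unfolding complementary_def by (meson bspec)
  define z where "z = S BK"
  have "z \<in> BK" using S BK unfolding z_def selection_def by blast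
  then obtain m' where m': "(m, m') \<in> EK" "lK m' = z" unfolding BK_def by blast
  have "neg z \<in> BJ" unfolding z_def by (intro subsetD[OF S_sub] imageI BK)
  then obtain n' where n': "(n, n') \<in> EJ" "lJ n' = neg z" unfolding BJ_def by auto
  have "n' \<in> NJ" "m' \<in> NK" using jJ jK n' m' unfolding justification_def by auto
  then have "z \<in> F" using jK m' unfolding justification_def by auto
  then have "neg (neg z) = z" using fs unfolding fact_space_def by blast
  then show ?thesis using \<open>n' \<in> NJ\<close> \<open>m' \<in> NK\<close> m' n' by metis
qed

theorem mainTheorem7:
  fixes F Fd :: "'a set" and neg :: "'a \<Rightarrow> 'a" and t f u :: 'a
    and R :: "('a \<times> 'a set) set"
    and NJ :: "'n set" and EJ :: "('n \<times> 'n) set" and lJ :: "'n \<Rightarrow> 'a"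
    and NK :: "'m set" and EK :: "('m \<times> 'm) set" and lK :: "'m \<Rightarrow> 'a"
    and x :: 'a
  assumes "justification_frame F neg t f u Fd R"
    and "complementary neg Fd R"
    and "x \<in> Fd"
    and "in_JJ F Fd R NJ EJ lJ x"
    and "in_JJ F Fd R NK EK lK (neg x)"
  shows "\<exists>p q len. branch NJ EJ lJ x p len \<and> branch NK EK lK (neg x) q len \<and>
           (\<forall>i. enat i < len \<longrightarrow> lK (q i) = neg (lJ (p i)))"
proof -
  have J: "justification F Fd R NJ EJ lJ" "locally_complete Fd NJ EJ lJ"
    and K: "justification F Fd R NK EK lK" "locally_complete Fd NK EK lK"
    using assms(4,5) unfolding in_JJ_def by auto
  obtain r1 where r1: "r1 \<in> NJ" "lJ r1 = x" "\<forall>n\<in>NJ. (r1, n) \<in> EJ\<^sup>*"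
    using assms(4) unfolding in_JJ_def rooted_in_def by blast
  obtain r2 where r2: "r2 \<in> NK" "lK r2 = neg x" "\<forall>n\<in>NK. (r2, n) \<in> EK\<^sup>*"
    using assms(5) unfolding in_JJ_def rooted_in_def by blast
  define mirrored where "mirrored = (\<lambda>(n, m). n \<in> NJ \<and> m \<in> NK \<and> lK m = neg (lJ n))"
  define has_child where "has_child = (\<lambda>(n, m). (\<exists>c. (n, c) \<in> EJ) \<or> (\<exists>c. (m, c) \<in> EK))"
  define edge where "edge = (\<lambda>(n, m) (n', m'). (n, n') \<in> EJ \<and> (m, m') \<in> EK)"
  have "\<exists>z'. edge z z' \<and> mirrored z'" if z: "mirrored z" "has_child z" for z
  proof -
    obtain n' m' where "(fst z, n') \<in> EJ" "(snd z, m') \<in> EK" "mirrored (n', m')"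
      using complementary_mirrored_children[OF assms(1,2) J K, of "fst z" "snd z"] z
      unfolding mirrored_def has_child_def split_beta by auto
    then show ?thesis by (intro exI[of _ "(n', m')"]) (simp add: edge_def split_beta)
  qed
  then obtain s len where "s 0 = (r1, r2)" "len \<noteq> 0" "\<forall>i. mirrored (s i)"
    "\<forall>i. enat (Suc i) < len \<longrightarrow> edge (s i) (s (Suc i))"
    "\<forall>k. len = enat (Suc k) \<longrightarrow> \<not> has_child (s k)"
    using maximal_path_exists[of mirrored "(r1, r2)" has_child edge] r1 r2
    unfolding mirrored_def by auto
  then show ?thesis
    using r1 r2 unfolding branch_def mirrored_def has_child_def edge_def split_beta
    by (intro exI[of _ "\<lambda>i. fst (s i)"] exI[of _ "\<lambda>i. snd (s i)"] exI[of _ len]) auto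
qed

end
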